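(* Let $d\in\mathbb{N}$ and $\mathcal{M}\subseteq\mathbb{N}_0^d$. Then $\mathcal{M}$ is reflexive if and only if there is a game $\mathcal{X}\subseteq\mathbb{N}_0^d$ such that the limit $\mathcal{X}^\infty$ exists and $\mathcal{M}=\mathcal{X}^\infty$.
   Context: For $d\in\mathbb{N}$ a game is a set $\mathcal{M}\subseteq\mathbb{N}_0^d$ of moves ($\mathbb{N}$ = positive integers, $\mathbb{N}_0$ = nonnegative integers). From position $\boldsymbol x\in\mathbb{N}_0^d$ a player may move to $\boldsymbol y\in\mathbb{N}_0^d$ iff $\boldsymbol x-\boldsymbol y\in\mathcal{M}$ ($\boldsymbol y$ is an option of $\boldsymbol x$). Misère play: a player who cannot move wins. If $\boldsymbol 0\in\mathcal{M}$, every position is a draw and the set of P-positions is $P(\mathcal{M})=\varnothing$. Otherwise outcomes are defined recursively: a position is an N-position if it has no option or some option is a P-position; otherwise (its set of options is nonempty and consists only of N-positions) it is a P-position. $P(\mathcal{M})$ and $N(\mathcal{M})$ denote the sets of P- and N-positions. The $\star$-operator is $\mathcal{M}^\star=P(\mathcal{M})$ (viewed as a new game). Set $\mathcal{M}^0=\mathcal{M}$, $\mathcal{M}^i=(\mathcal{M}^{i-1})^\star$. The limit $\mathcal{M}^\infty=\lim_{i\to\infty}\mathcal{M}^i$ exists if for every $\boldsymbol x\in\mathbb{N}_0^d$ either $\boldsymbol x\in\mathcal{M}^i$ for all sufficiently large $i$ or $\boldsymbol x\notin\mathcal{M}^i$ for all sufficiently large $i$; then $\mathcal{M}^\infty$ is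 the set of $\boldsymbol x$ of the first kind. A game $\mathcal{M}$ is reflexive if $\mathcal{M}=\mathcal{M}^\star$. *)

theory Defs
  imports "HOL-Analysis.Analysis"
begin

text \<open>Positions are vectors in N_0^d, modelled as nat ^ 'd for a finite index type 'd
  (d = CARD('d) >= 1).\<close>

type_synonym 'd pos = "nat ^ 'd"

definition is_option :: "'d::finite pos set \<Rightarrow> 'd pos \<Rightarrow> 'd pos \<Rightarrow> bool" where
  "is_option M x y \<longleftrightarrow> (\<exists>m\<in>M. x = y + m)"

text \<open>Well-founded relation along which outcomes are computed (0 \<notin> M): options have
  strictly smaller coordinate sum.\<close>
definition opt_rel :: "'d::finite pos set \<Rightarrow> ('d pos \<times> 'd pos) set" where
  "opt_rel M = {(y, x). is_option M x y \<and> y \<noteq> x}"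

lemma wf_opt_rel: "wf (opt_rel (M :: 'd::finite pos set))"
proof (rule wf_subset[OF wf_measure[of "\<lambda>x::'d pos. \<Sum>i\<in>UNIV. x $ i"]])
  show "opt_rel M \<subseteq> Wellfounded.measure (\<lambda>x. \<Sum>i\<in>UNIV. x $ i)"
  proof
    fix p assume "p \<in> opt_rel M"
    then obtain y x m where p: "p = (y, x)" and xm: "x = y + m" and ne: "y \<noteq> x"
      unfolding opt_rel_def is_option_def by auto
    then obtain j where "m $ j \<noteq> 0" by (metis add.right_neutral vec_eq_iff zero_index)
    hence "(\<Sum>i\<in>UNIV. y $ i) < (\<Sum>i\<in>UNIV. y $ i + m $ i)"
      by (intro sum_strict_mono_ex1) auto
    thus "p \<in> Wellfounded.measure (\<lambda>x. \<Sum>i\<in>UNIV. x $ i)" using p xm by simp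
  qed
qed

text \<open>Misere outcome: x is a P-position iff it has an option and all options are
  N-positions (i.e. not P-positions).  Defined by well-founded recursion.\<close>
definition is_P :: "'d::finite pos set \<Rightarrow> 'd pos \<Rightarrow> bool" where
  "is_P M = wfrec (opt_rel M)
     (\<lambda>f x. (\<exists>y. is_option M x y) \<and> (\<forall>y. is_option M x y \<longrightarrow> \<not> f y))"

text \<open>P(M): empty if 0 \<in> M (all positions are draws), else the set of P-positions.\<close>
definition Ppos :: "'d::finite pos set \<Rightarrow> 'd pos set" where
  "Ppos M = (if 0 \<in> M then {} else {x. is_P M x})"

definition star :: "'d::finite pos set \<Rightarrow> 'd pos set" where
  "star M = Ppos M"

definition star_iter :: "'d::finite pos set \<Rightarrow> nat \<Rightarrow> 'd pos set" where
  "star_iter M i = (star ^^ i) M"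

definition reflexive_game :: "'d::finite pos set \<Rightarrow> bool" where
  "reflexive_game M \<longleftrightarrow> M = star M"

definition limit_exists :: "(nat \<Rightarrow> 'a set) \<Rightarrow> bool" where
  "limit_exists S \<longleftrightarrow> (\<forall>x. (\<forall>\<^sub>F i in sequentially. x \<in> S i) \<or> (\<forall>\<^sub>F i in sequentially. x \<notin> S i))"

definition limit_set :: "(nat \<Rightarrow> 'a set) \<Rightarrow> 'a set" where
  "limit_set S = {x. \<forall>\<^sub>F i in sequentially. x \<in> S i}"

end

theory Submission
  imports Defs
begin

text \<open>Whether a position x is a P-position depends only on the moves m \<le> x, a finite set
  (componentwise order).  If the iterates X_i of X converge to M, then for large i they agree
  with M on {..x}, so x \<in> star M iff x \<in> star X_i = X_(i+1) iff x \<in> M; hence the limit is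
  reflexive.  Conversely a reflexive game is its own constant, hence convergent, sequence
  of iterates.\<close>

lemma is_P_iff:
  assumes "0 \<notin> M"
  shows "is_P M x \<longleftrightarrow> (\<exists>y. is_option M x y) \<and> (\<forall>y. is_option M x y \<longrightarrow> \<not> is_P M y)"
proof -
  have "is_P M x = (\<lambda>f x. (\<exists>y. is_option M x y) \<and> (\<forall>y. is_option M x y \<longrightarrow> \<not> f y))
          (cut (is_P M) (opt_rel M) x) x"
    unfolding is_P_def by (rule wfrec[OF wf_opt_rel])
  moreover have "\<And>y. is_option M x y \<Longrightarrow> (y, x) \<in> opt_rel M"
    using assms unfolding opt_rel_def is_option_def by auto
  ultimately show ?thesis by (auto simp: cut_apply)
qed

lemma finite_atMost_pos: "finite {..x :: 'd::finite pos}"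
proof -
  have "{..x} \<subseteq> vec_lambda ` PiE UNIV (\<lambda>i. {..x $ i})"
  proof
    fix m assume "m \<in> {..x}"
    hence "vec_nth m \<in> PiE UNIV (\<lambda>i. {..x $ i})" by (auto simp: less_eq_vec_def)
    thus "m \<in> vec_lambda ` PiE UNIV (\<lambda>i. {..x $ i})" by (metis image_eqI vec_nth_inverse)
  qed
  moreover have "finite (PiE (UNIV :: 'd set) (\<lambda>i. {..x $ i}))"
    by (rule finite_PiE) auto
  ultimately show ?thesis by (meson finite_imageI finite_subset)
qed

lemma is_option_iff_moves_atMost:
  assumes "M \<inter> {..x} = M' \<inter> {..x}"
  shows "is_option M x y \<longleftrightarrow> is_option M' x y"
proof -
  have "x = y + m \<Longrightarrow> m \<le> x" for m by (simp add: less_eq_vec_def)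
  thus ?thesis using assms unfolding is_option_def by blast
qed

lemma is_option_le: "is_option M x y \<Longrightarrow> y \<le> x"
  by (auto simp: is_option_def less_eq_vec_def)

lemma is_P_cong_atMost:
  assumes "0 \<notin> M" "0 \<notin> M'" and "M \<inter> {..x} = M' \<inter> {..x}"
  shows "is_P M x \<longleftrightarrow> is_P M' x"
  using assms(3)
proof (induction x rule: wf_induct[OF wf_opt_rel[of M]])
  case (1 x)
  have options: "is_option M x y \<longleftrightarrow> is_option M' x y" for y
    using "1.prems" by (rule is_option_iff_moves_atMost)
  have "is_P M y \<longleftrightarrow> is_P M' y" if "is_option M x y" for y
  proof (rule "1.IH"[rule_format])
    show "(y, x) \<in> opt_rel M"
      using that assms(1) unfolding opt_rel_def is_option_def by auto
    have "{..y} \<subseteq> {..x}" using is_option_le[OF that] by simp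
    thus "M \<inter> {..y} = M' \<inter> {..y}" using "1.prems" by (metis Int_absorb1 Int_assoc)
  qed
  thus ?case using is_P_iff[OF assms(1)] is_P_iff[OF assms(2)] options by metis
qed

lemma Ppos_cong_atMost:
  assumes "M \<inter> {..x} = M' \<inter> {..x}"
  shows "x \<in> Ppos M \<longleftrightarrow> x \<in> Ppos M'"
proof -
  have "0 \<le> x" by (simp add: less_eq_vec_def)
  hence "0 \<in> M \<longleftrightarrow> 0 \<in> M'" using assms by blast
  thus ?thesis using is_P_cong_atMost[OF _ _ assms] by (auto simp: Ppos_def)
qed

lemma star_iter_reflexive:
  assumes "reflexive_game M"
  shows "star_iter M i = M"
  using assms by (induction i) (auto simp: star_iter_def reflexive_game_def)

lemma limit_exists_const: "limit_exists (\<lambda>i. A)"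
  by (simp add: limit_exists_def)

lemma limit_set_const: "limit_set (\<lambda>i. A) = A"
  by (simp add: limit_set_def)

lemma eventually_agrees_with_limit_set:
  assumes "limit_exists S" and "finite A"
  shows "\<forall>\<^sub>F i in sequentially. S i \<inter> A = limit_set S \<inter> A"
proof -
  have "\<forall>\<^sub>F i in sequentially. x \<in> S i \<longleftrightarrow> x \<in> limit_set S" for x
  proof (cases "x \<in> limit_set S")
    case True
    thus ?thesis by (auto simp: limit_set_def elim: eventually_mono)
  next
    case False
    hence "\<forall>\<^sub>F i in sequentially. x \<notin> S i"
      using assms(1) by (auto simp: limit_exists_def limit_set_def)
    thus ?thesis using False by (auto elim: eventually_mono)
  qed
  hence "\<forall>\<^sub>F i in sequentially. \<forall>x\<in>A. x \<in> S i \<longleftrightarrow> x \<in> limit_set S"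
    by (intro eventually_ball_finite[OF assms(2)]) auto
  thus ?thesis by (auto elim: eventually_mono)
qed

lemma reflexive_limit_set:
  fixes X :: "'d::finite pos set"
  assumes "limit_exists (star_iter X)"
  shows "reflexive_game (limit_set (star_iter X))"
proof -
  define S M where "S = star_iter X" and "M = limit_set (star_iter X)"
  have "x \<in> M \<longleftrightarrow> x \<in> star M" for x
  proof -
    have "\<forall>\<^sub>F i in sequentially. S i \<inter> {..x} = M \<inter> {..x}"
      using eventually_agrees_with_limit_set[OF assms finite_atMost_pos]
      by (simp add: S_def M_def)
    moreover have "\<forall>\<^sub>F i in sequentially. S (Suc i) \<inter> {x} = M \<inter> {x}"
      using eventually_agrees_with_limit_set[OF assms, of "{x}"]
      unfolding eventually_sequentially_Suc[of "\<lambda>i. S i \<inter> {x} = M \<inter> {x}"]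
      by (simp add: S_def M_def)
    ultimately have "\<forall>\<^sub>F i in sequentially.
        S i \<inter> {..x} = M \<inter> {..x} \<and> S (Suc i) \<inter> {x} = M \<inter> {x}"
      by (rule eventually_conj)
    then obtain i where agree: "S i \<inter> {..x} = M \<inter> {..x}"
        and next_agrees: "S (Suc i) \<inter> {x} = M \<inter> {x}"
      using eventually_happens'[OF trivial_limit_sequentially] by blast
    have "S (Suc i) = star (S i)" by (simp add: S_def star_iter_def)
    thus ?thesis using Ppos_cong_atMost[OF agree] next_agrees by (auto simp: star_def)
  qed
  thus ?thesis unfolding reflexive_game_def M_def by blast
qed

theorem lemma1:
  fixes M :: "'d::finite pos set"
  shows "reflexive_game M \<longleftrightarrow>
    (\<exists>X :: 'd pos set. limit_exists (star_iter X) \<and> M = limit_set (star_iter X))"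
proof
  assume "reflexive_game M"
  hence "star_iter M = (\<lambda>i. M)" by (auto simp: star_iter_reflexive)
  thus "\<exists>X. limit_exists (star_iter X) \<and> M = limit_set (star_iter X)"
    by (metis limit_exists_const limit_set_const)
next
  assume "\<exists>X. limit_exists (star_iter X) \<and> M = limit_set (star_iter X)"
  thus "reflexive_game M" using reflexive_limit_set by blast
qed

end
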